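(* Let $\mathcal T$ be a good triangulation of $\mathcal C_G$ and let $S$ be any simplex of $\mathcal T$. Then the graph $(V,D(S))$ contains no cycle, i.e. there is no cycle of double edges.
   Context: For a finite undirected multigraph $G=(V,E)$ (loops, parallel edges and isolated nodes allowed) with $n=|V|$, $m=|E|$, work in $\mathbb{R}^V\times\mathbb{R}^E\cong\mathbb{R}^{n+m}$ with standard basis vectors $e_u$ ($u\in V$), $e_f$ ($f\in E$). Fix for each edge $f$ an ordering $(u,v)$ of its endpoints ($u=v$ for a loop) and set $\widetilde e_f=e_u+e_v-e_f$, $\overleftarrow e_f=e_u-e_v+e_f$, $\overrightarrow e_f=-e_u+e_v+e_f$ (so for a loop $\overleftarrow e_f=\overrightarrow e_f=e_f$). The cosmological polytope $\mathcal C_G$ is the convex hull of $\{e_f,\widetilde e_f,\overleftarrow e_f,\overrightarrow e_f: f\in E\}\cup\{e_u: u\in V\}$; these are exactly its lattice points, and it is an $(n+m-1)$-dimensional polytope in the hyperplane $\sum_i x_i=1$. A good triangulation of $\mathcal C_G$ is a regular triangulation (induced by a height function on the lattice points of $\mathcal C_G$) whose vertex set is the set of all lattice points of $\mathcal C_G$ and which contains the standard simplex $\mathrm{conv}\{e_u,e_f: u\in V, f\in E\}$ as a maximal cell; simplices are identified with their vertex sets. For a simplex $S\in\mathcal T$: the selected nodes are $V(S)=\{u\in V: e_u\in S\}$; the squiggly edges $\widetilde E(S)=\{f:\widetilde e_f\in S\}$; the selected edges $\widehat E(S)=\{f: e_f\in S\}$; for non-loop edges $f$, $f\in\overleftarrow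 E(S)$ iff $\overleftarrow e_f\in S$ and $f\in\overrightarrow E(S)$ iff $\overrightarrow e_f\in S$ (loops are never in $\overleftarrow E(S)\cup\overrightarrow E(S)$); the double edges are $D(S)=(\overleftarrow E(S)\cup\overrightarrow E(S))\cap\widehat E(S)$. *)

theory Defs
  imports Complex_Main
begin

text \<open>Multigraph: vertex set V, edge set E, and for each edge f a fixed ordering
  ends f = (u, v) of its endpoints (u = v for a loop).  Points of
  R^V x R^E are functions ('v + 'e) => real supported on V <+> E.\<close>

type_synonym ('v, 'e) pt = "('v + 'e) \<Rightarrow> real"

definition unitv :: "'v \<Rightarrow> ('v, 'e) pt" where
  "unitv u = (\<lambda>i. if i = Inl u then 1 else 0)"

definition unite :: "'e \<Rightarrow> ('v, 'e) pt" where
  "unite f = (\<lambda>i. if i = Inr f then 1 else 0)"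

definition tilde_pt :: "('e \<Rightarrow> 'v \<times> 'v) \<Rightarrow> 'e \<Rightarrow> ('v, 'e) pt" where
  "tilde_pt ends f = (\<lambda>i. unitv (fst (ends f)) i + unitv (snd (ends f)) i - unite f i)"

definition left_pt :: "('e \<Rightarrow> 'v \<times> 'v) \<Rightarrow> 'e \<Rightarrow> ('v, 'e) pt" where
  "left_pt ends f = (\<lambda>i. unitv (fst (ends f)) i - unitv (snd (ends f)) i + unite f i)"

definition right_pt :: "('e \<Rightarrow> 'v \<times> 'v) \<Rightarrow> 'e \<Rightarrow> ('v, 'e) pt" where
  "right_pt ends f = (\<lambda>i. - unitv (fst (ends f)) i + unitv (snd (ends f)) i + unite f i)"

definition cosmo_points :: "'v set \<Rightarrow> 'e set \<Rightarrow> ('e \<Rightarrow> 'v \<times> 'v) \<Rightarrow> ('v, 'e) pt set" where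
  "cosmo_points V E ends =
     unitv ` V \<union> unite ` E \<union> tilde_pt ends ` E \<union> left_pt ends ` E \<union> right_pt ends ` E"

text \<open>Standard simplex conv{e_u, e_f}, identified with its vertex set.\<close>
definition std_simplex :: "'v set \<Rightarrow> 'e set \<Rightarrow> ('v, 'e) pt set" where
  "std_simplex V E = unitv ` V \<union> unite ` E"

definition lin_form :: "'v set \<Rightarrow> 'e set \<Rightarrow> ('v, 'e) pt \<Rightarrow> ('v, 'e) pt \<Rightarrow> real" where
  "lin_form V E w a = (\<Sum>i\<in>V <+> E. w i * a i)"

text \<open>Cells (faces of all dimensions) of the regular subdivision of the point set A
  induced by the height function h: the sets of points whose lifts lie on a lower
  face of the lifted configuration.\<close>
definition regular_cell ::
  "'v set \<Rightarrow> 'e set \<Rightarrow> ('v, 'e) pt set \<Rightarrow> (('v, 'e) pt \<Rightarrow> real) \<Rightarrow> ('v, 'e) pt set \<Rightarrow> bool" where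
  "regular_cell V E A h \<sigma> \<longleftrightarrow> \<sigma> \<subseteq> A \<and>
     (\<exists>c w. (\<forall>a\<in>\<sigma>. c + lin_form V E w a = h a) \<and> (\<forall>a\<in>A - \<sigma>. c + lin_form V E w a < h a))"

definition aff_indep_pts :: "'v set \<Rightarrow> 'e set \<Rightarrow> ('v, 'e) pt set \<Rightarrow> bool" where
  "aff_indep_pts V E \<sigma> \<longleftrightarrow> finite \<sigma> \<and>
     (\<forall>coef::('v, 'e) pt \<Rightarrow> real. (\<Sum>a\<in>\<sigma>. coef a) = 0 \<and> (\<forall>i\<in>V <+> E. (\<Sum>a\<in>\<sigma>. coef a * a i) = 0)
        \<longrightarrow> (\<forall>a\<in>\<sigma>. coef a = 0))"

definition good_triangulation ::
  "'v set \<Rightarrow> 'e set \<Rightarrow> ('e \<Rightarrow> 'v \<times> 'v) \<Rightarrow> ('v, 'e) pt set set \<Rightarrow> bool" where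
  "good_triangulation V E ends T \<longleftrightarrow>
     (\<exists>h. T = {\<sigma>. regular_cell V E (cosmo_points V E ends) h \<sigma>}) \<and>
     (\<forall>\<sigma>\<in>T. aff_indep_pts V E \<sigma>) \<and>
     (\<forall>a\<in>cosmo_points V E ends. \<exists>\<sigma>\<in>T. a \<in> \<sigma>) \<and>
     std_simplex V E \<in> T \<and>
     (\<forall>\<sigma>\<in>T. std_simplex V E \<subseteq> \<sigma> \<longrightarrow> \<sigma> = std_simplex V E)"

definition double_edges ::
  "'e set \<Rightarrow> ('e \<Rightarrow> 'v \<times> 'v) \<Rightarrow> ('v, 'e) pt set \<Rightarrow> 'e set" where
  "double_edges E ends S = {f\<in>E. fst (ends f) \<noteq> snd (ends f) \<and>
       (left_pt ends f \<in> S \<or> right_pt ends f \<in> S) \<and> unite f \<in> S}"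

definition joins :: "('e \<Rightarrow> 'v \<times> 'v) \<Rightarrow> 'e \<Rightarrow> 'v \<Rightarrow> 'v \<Rightarrow> bool" where
  "joins ends f x y \<longleftrightarrow> {fst (ends f), snd (ends f)} = {x, y}"

text \<open>A cycle in the multigraph with edge set F: distinct vertices v_0..v_{k-1},
  distinct edges f_0..f_{k-1} (k >= 1) with f_i joining v_i and v_{i+1 mod k}.
  (Two parallel edges form a cycle of length 2; a loop one of length 1.)\<close>
definition has_cycle :: "('e \<Rightarrow> 'v \<times> 'v) \<Rightarrow> 'v set \<Rightarrow> 'e set \<Rightarrow> bool" where
  "has_cycle ends V F \<longleftrightarrow> (\<exists>vs es. length vs = length es \<and> length es \<ge> 1 \<and>
      distinct vs \<and> distinct es \<and> set vs \<subseteq> V \<and> set es \<subseteq> F \<and>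
      (\<forall>i<length es. joins ends (es ! i) (vs ! i) (vs ! ((i + 1) mod length vs))))"

end

theory Submission
  imports Defs
begin

text \<open>For a non-loop edge f = uv the points e_u - e_v + e_f and -e_u + e_v + e_f differ from
  e_f by \<plusminus>(e_u - e_v).  Along a cycle of double edges these differences telescope to zero,
  so suitably signed differences of points of the simplex S sum to zero: an affine dependence
  among the vertices of S, which contradicts S being a simplex.\<close>

lemma left_right_pt_minus_unite:
  assumes "fst (ends f) \<noteq> snd (ends f)" and "joins ends f x y"
    and "p = left_pt ends f \<or> p = right_pt ends f"
  shows "\<exists>c\<in>{1, -1::real}. \<forall>j. p j - unite f j = c * (unitv x j - unitv y j)"
proof -
  from assms(1,2) have "ends f = (x, y) \<or> ends f = (y, x)"
    unfolding joins_def by (metis doubleton_eq_iff prod.collapse)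
  with assms(3) show ?thesis
    by (elim disjE) (force simp: left_pt_def right_pt_def)+
qed

lemma left_right_pt_ne_unite:
  assumes "fst (ends f) \<noteq> snd (ends f)" and "p = left_pt ends f \<or> p = right_pt ends f"
  shows "p \<noteq> unite g"
proof
  assume "p = unite g"
  then have "p (Inl (fst (ends f))) = unite g (Inl (fst (ends f)))" by simp
  with assms show False
    by (auto simp: left_pt_def right_pt_def unite_def unitv_def)
qed

lemma unite_eq_iff: "(unite f :: ('v, 'e) pt) = unite g \<longleftrightarrow> f = g"
  unfolding unite_def fun_eq_iff by (metis sum.inject(2) zero_neq_one)

lemma sum_lessThan_rotate:
  fixes g :: "nat \<Rightarrow> 'a::comm_monoid_add"
  assumes "0 < k"
  shows "(\<Sum>i<k. g ((i + 1) mod k)) = (\<Sum>i<k. g i)"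
proof -
  obtain m where k: "k = Suc m" using assms by (cases k) auto
  have "(\<Sum>i<Suc m. g ((i + 1) mod Suc m)) = (\<Sum>i<m. g ((i + 1) mod Suc m)) + g 0"
    by (simp add: sum.lessThan_Suc)
  also have "(\<Sum>i<m. g ((i + 1) mod Suc m)) = (\<Sum>i<m. g (Suc i))"
    by (rule sum.cong) auto
  also have "\<dots> + g 0 = (\<Sum>i<Suc m. g i)"
    by (subst sum.lessThan_Suc_shift) (simp add: add.commute)
  finally show ?thesis using k by simp
qed

lemma sum_cyclic_differences:
  fixes g :: "nat \<Rightarrow> 'a::ab_group_add"
  assumes "0 < k"
  shows "(\<Sum>i<k. g i - g ((i + 1) mod k)) = 0"
  using sum_lessThan_rotate[OF assms, of g] by (simp add: sum_subtractf)

lemma sum_point_weights: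
  fixes g :: "'a \<Rightarrow> 'b::comm_ring"
  assumes "finite \<sigma>" and "\<forall>i<k. p i \<in> \<sigma>"
  shows "(\<Sum>a\<in>\<sigma>. (\<Sum>i<k. if a = p i then c i else 0) * g a) = (\<Sum>i<k. c i * g (p i))"
proof -
  have "(\<Sum>a\<in>\<sigma>. (\<Sum>i<k. if a = p i then c i else 0) * g a)
      = (\<Sum>i<k. \<Sum>a\<in>\<sigma>. if a = p i then c i * g a else 0)"
    by (simp add: sum_distrib_right if_distrib[of "\<lambda>x. x * _"] cong: if_cong) (rule sum.swap)
  also have "\<dots> = (\<Sum>i<k. c i * g (p i))"
    using assms by (intro sum.cong) (auto simp: sum.delta' cong: if_cong)
  finally show ?thesis .
qed

lemma not_aff_indep_pts_if_differences_cancel: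
  fixes p q :: "nat \<Rightarrow> ('v, 'e) pt" and c :: "nat \<Rightarrow> real"
  assumes "\<forall>i<k. p i \<in> \<sigma> \<and> q i \<in> \<sigma>" and "0 < k"
    and "\<forall>i<k. q 0 \<noteq> p i" and "\<forall>i<k. q i = q 0 \<longrightarrow> i = 0" and "c 0 \<noteq> 0"
    and "\<forall>j. (\<Sum>i<k. c i * (p i j - q i j)) = 0"
  shows "\<not> aff_indep_pts V E \<sigma>"
proof
  assume indep: "aff_indep_pts V E \<sigma>"
  then have fin: "finite \<sigma>" unfolding aff_indep_pts_def by blast
  define coef where
    "coef a = (\<Sum>i<k. if a = p i then c i else 0) - (\<Sum>i<k. if a = q i then c i else 0)" for a
  have weights: "(\<Sum>a\<in>\<sigma>. coef a * g a) = (\<Sum>i<k. c i * (g (p i) - g (q i)))"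
    for g :: "('v, 'e) pt \<Rightarrow> real"
    using sum_point_weights[OF fin, of k p c g] sum_point_weights[OF fin, of k q c g] assms(1)
    by (simp add: coef_def left_diff_distrib sum_subtractf right_diff_distrib)
  have "(\<Sum>a\<in>\<sigma>. coef a) = 0"
    using weights[of "\<lambda>_. 1"] by simp
  moreover have "(\<Sum>a\<in>\<sigma>. coef a * a j) = 0" for j
    using weights[of "\<lambda>a. a j"] assms(6) by simp
  moreover have "coef (q 0) = - c 0"
  proof -
    have "(\<Sum>i<k. if q 0 = q i then c i else 0) = (\<Sum>i<k. if i = 0 then c i else 0)"
      using assms(4) by (intro sum.cong) auto
    with assms(2,3) show ?thesis by (simp add: coef_def)
  qed
  ultimately show False
    using indep assms(1,2,5) unfolding aff_indep_pts_def by fastforce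
qed

lemma sum_signed_cyclic_differences:
  fixes c d g :: "nat \<Rightarrow> real"
  assumes "0 < k" and "\<forall>i<k. c i \<in> {1, -1} \<and> d i = c i * (g i - g ((i + 1) mod k))"
  shows "(\<Sum>i<k. c i * d i) = 0"
proof -
  have "(\<Sum>i<k. c i * d i) = (\<Sum>i<k. g i - g ((i + 1) mod k))"
    using assms(2) by (intro sum.cong) auto
  with sum_cyclic_differences[OF assms(1)] show ?thesis by simp
qed

lemma double_edge_cycle_not_aff_indep:
  fixes es :: "'e list" and S :: "('v, 'e) pt set"
  assumes "length vs = length es" and "0 < length es" and "distinct es"
    and "set es \<subseteq> double_edges E ends S"
    and "\<forall>i<length es. joins ends (es ! i) (vs ! i) (vs ! ((i + 1) mod length es))"
  shows "\<not> aff_indep_pts V E S"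
proof -
  define k where "k = length es"
  have k: "0 < k" using assms(2) unfolding k_def .
  define r where "r i = (if left_pt ends (es ! i) \<in> S then left_pt ends (es ! i)
    else right_pt ends (es ! i))" for i
  have r: "r i = left_pt ends (es ! i) \<or> r i = right_pt ends (es ! i)" for i
    unfolding r_def by auto
  have edge: "fst (ends (es ! i)) \<noteq> snd (ends (es ! i)) \<and> r i \<in> S \<and> unite (es ! i) \<in> S"
    if "i < k" for i
    using assms(4) nth_mem[OF that[unfolded k_def]] unfolding double_edges_def r_def by auto
  obtain c where c: "\<And>i. i < k \<Longrightarrow> c i \<in> {1, -1} \<and>
      (\<forall>j. r i j - unite (es ! i) j = c i * (unitv (vs ! i) j - unitv (vs ! ((i + 1) mod k)) j))"
    using left_right_pt_minus_unite[OF conjunct1[OF edge] assms(5)[rule_format] r]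
    unfolding k_def by metis
  have "\<forall>j. (\<Sum>i<k. c i * (r i j - unite (es ! i) j)) = 0"
    using c by (intro allI sum_signed_cyclic_differences[OF k]) auto
  moreover have "\<forall>i<k. unite (es ! 0) \<noteq> r i"
    using left_right_pt_ne_unite[OF _ r] edge by metis
  moreover have "\<forall>i<k. unite (es ! i) = (unite (es ! 0) :: ('v, 'e) pt) \<longrightarrow> i = 0"
    using assms(3) k by (simp add: unite_eq_iff nth_eq_iff_index_eq k_def)
  moreover have "c 0 \<noteq> 0"
    using c[OF k] by auto
  ultimately show ?thesis
    using edge k
    by (intro not_aff_indep_pts_if_differences_cancel[where q = "\<lambda>i. unite (es ! i)"]) auto
qed

theorem mainTheorem4:
  fixes V :: "'v set" and E :: "'e set" and ends :: "'e \<Rightarrow> 'v \<times> 'v"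
    and T :: "('v, 'e) pt set set" and S :: "('v, 'e) pt set"
  assumes "finite V" and "finite E"
    and "\<forall>f\<in>E. fst (ends f) \<in> V \<and> snd (ends f) \<in> V"
    and "good_triangulation V E ends T"
    and "S \<in> T"
  shows "\<not> has_cycle ends V (double_edges E ends S)"
proof
  assume "has_cycle ends V (double_edges E ends S)"
  then obtain vs es where "length vs = length es" "1 \<le> length es" "distinct es"
    "set es \<subseteq> double_edges E ends S"
    "\<forall>i<length es. joins ends (es ! i) (vs ! i) (vs ! ((i + 1) mod length vs))"
    unfolding has_cycle_def by blast
  then have "\<not> aff_indep_pts V E S"
    by (intro double_edge_cycle_not_aff_indep[of vs es]) auto
  then show False
    using assms(4,5) unfolding good_triangulation_def by blast
qed

end
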